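(* Let $c\in\{0,1\}^n$ and let $S_c$ be the set of all points of $\{0,1\}^n$ at Hamming distance exactly $1$ from $c$. Let $A\subseteq S_c$ with $|A|=\ell\ge 3$, and let $c_A=\frac{1}{|A|}\sum_{x\in A}x\in\mathbb R^n$ be its centroid. Then (a) $d(c_A,a)<1$ for every $a\in A$, and (b) $d(c_A,a)\ge 1$ for every $a\in\{0,1\}^n\setminus(A\cup\{c\})$, where $d$ is the Euclidean distance. *)

theory Defs
  imports "HOL-Analysis.Analysis"
begin

definition cube :: "(real ^ 'n) set" where
  "cube = {x. \<forall>i. x $ i = 0 \<or> x $ i = 1}"

definition hamming :: "real ^ 'n \<Rightarrow> real ^ 'n \<Rightarrow> nat" where
  "hamming x y = card {i. x $ i \<noteq> y $ i}"

definition sphere1 :: "real ^ 'n \<Rightarrow> (real ^ 'n) set" where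
  "sphere1 c = {x \<in> cube. hamming x c = 1}"

definition centroid :: "(real ^ 'n) set \<Rightarrow> real ^ 'n" where
  "centroid A = (1 / real (card A)) *\<^sub>R (\<Sum>x\<in>A. x)"

end

theory Submission
  imports Defs
begin

text \<open>
  Write every cube point as c with the coordinates in some set K flipped, so that the points
  of S_c are c with a single coordinate flipped and A corresponds to a set J of l coordinates.
  Coordinatewise, c_A - b is (1 - 2c_i)(1/l [i \<in> J] - [i \<in> K]), hence
  d(c_A, b)^2 = |K| + (1 - 2|J \<inter> K|)/l.  For b \<in> A this is 1 - 1/l; for b outside A \<union> {c}
  either K is a singleton outside J, giving 1 + 1/l, or |K| \<ge> 2, and then |J \<inter> K| \<le> |K|
  and l \<ge> 3 give at least 1.
\<close>

definition flip_coords :: "real ^ 'n \<Rightarrow> 'n set \<Rightarrow> real ^ 'n" where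
  "flip_coords c K = (\<chi> i. if i \<in> K then 1 - c $ i else c $ i)"

lemma flip_coords_nth: "flip_coords c K $ i = c $ i + of_bool (i \<in> K) * (1 - 2 * c $ i)"
  by (simp add: flip_coords_def)

lemma cube_nth_cases: "x \<in> cube \<Longrightarrow> x $ i = 0 \<or> x $ i = 1"
  by (simp add: cube_def)

lemma flip_coords_in_cube: "c \<in> cube \<Longrightarrow> flip_coords c K \<in> cube"
  by (auto simp: cube_def flip_coords_def)

lemma cube_nth_ne_half: "x \<in> cube \<Longrightarrow> 2 * x $ i \<noteq> 1"
  using cube_nth_cases[of x i] by auto

lemma flip_coords_diff_coords: "c \<in> cube \<Longrightarrow> {i. flip_coords c K $ i \<noteq> c $ i} = K"
  by (auto simp: flip_coords_nth cube_nth_ne_half)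

lemma inj_flip_coords: "c \<in> cube \<Longrightarrow> inj (flip_coords c)"
  by (rule injI) (metis flip_coords_diff_coords)

lemma flip_coords_diff_coords_eq:
  assumes "c \<in> cube" "b \<in> cube"
  shows "flip_coords c {i. b $ i \<noteq> c $ i} = b"
proof (rule vec_eq_iff[THEN iffD2], rule allI)
  fix i
  show "flip_coords c {i. b $ i \<noteq> c $ i} $ i = b $ i"
    using cube_nth_cases[OF assms(1), of i] cube_nth_cases[OF assms(2), of i]
    by (auto simp: flip_coords_nth)
qed

lemma hamming_flip_coords: "c \<in> cube \<Longrightarrow> hamming (flip_coords c K) c = card K"
  by (simp add: hamming_def flip_coords_diff_coords)

lemma sphere1_eq_flip_coords:
  assumes "c \<in> cube"
  shows "sphere1 c = (\<lambda>j. flip_coords c {j}) ` UNIV"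
proof
  show "sphere1 c \<subseteq> range (\<lambda>j. flip_coords c {j})"
  proof
    fix b assume "b \<in> sphere1 c"
    then have b: "b \<in> cube" and "card {i. b $ i \<noteq> c $ i} = 1"
      by (simp_all add: sphere1_def hamming_def)
    then obtain j where "{i. b $ i \<noteq> c $ i} = {j}"
      using card_1_singletonE by blast
    then have "b = flip_coords c {j}"
      using flip_coords_diff_coords_eq[OF assms b] by simp
    then show "b \<in> range (\<lambda>j. flip_coords c {j})" by blast
  qed
  show "range (\<lambda>j. flip_coords c {j}) \<subseteq> sphere1 c"
    by (auto simp: sphere1_def assms flip_coords_in_cube hamming_flip_coords)
qed

lemma inj_on_flip_coords_singleton: "c \<in> cube \<Longrightarrow> inj_on (\<lambda>j. flip_coords c {j}) J"
  by (auto simp: inj_on_def dest: injD[OF inj_flip_coords])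

lemma power2_dist_vec: "(dist x y)\<^sup>2 = (\<Sum>i\<in>UNIV. (x $ i - y $ i)\<^sup>2)"
  for x y :: "real ^ 'n"
  by (simp add: dist_vec_def L2_set_def dist_real_def sum_nonneg)

lemma centroid_flip_coords_singletons_nth:
  assumes "c \<in> cube" "J \<noteq> {}"
  shows "centroid ((\<lambda>j. flip_coords c {j}) ` J) $ i
           = c $ i + of_bool (i \<in> J) * (1 - 2 * c $ i) / card J"
proof -
  have "(\<Sum>j\<in>J. flip_coords c {j} $ i) = card J * c $ i + of_bool (i \<in> J) * (1 - 2 * c $ i)"
    by (simp add: flip_coords_nth sum.distrib)
  then show ?thesis
    using assms by (simp add: centroid_def card_image inj_on_flip_coords_singleton
        sum.reindex field_simps)
qed

lemma power2_dist_centroid_flip_coords: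
  assumes "c \<in> cube" "J \<noteq> {}"
  shows "(dist (centroid ((\<lambda>j. flip_coords c {j}) ` J)) (flip_coords c K))\<^sup>2
           = card K + (1 - 2 * real (card (J \<inter> K))) / card J"
proof -
  define l where "l = real (card J)"
  have "l > 0"
    using assms(2) by (simp add: l_def card_gt_0_iff)
  have nth_sq: "(centroid ((\<lambda>j. flip_coords c {j}) ` J) $ i - flip_coords c K $ i)\<^sup>2
      = of_bool (i \<in> J) / l\<^sup>2 - 2 * of_bool (i \<in> J \<inter> K) / l + of_bool (i \<in> K)" for i
  proof -
    have "centroid ((\<lambda>j. flip_coords c {j}) ` J) $ i - flip_coords c K $ i
        = (1 - 2 * c $ i) * (of_bool (i \<in> J) / l - of_bool (i \<in> K))"
      using assms \<open>l > 0\<close>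
      by (cases "i \<in> J"; cases "i \<in> K")
        (simp_all add: centroid_flip_coords_singletons_nth flip_coords_nth l_def field_simps)
    moreover have "(1 - 2 * c $ i)\<^sup>2 = 1"
      using cube_nth_cases[OF assms(1), of i] by auto
    ultimately have "(centroid ((\<lambda>j. flip_coords c {j}) ` J) $ i - flip_coords c K $ i)\<^sup>2
        = (of_bool (i \<in> J) / l - of_bool (i \<in> K))\<^sup>2"
      by (simp only: power_mult_distrib)
    also have "\<dots> = of_bool (i \<in> J) / l\<^sup>2 - 2 * of_bool (i \<in> J \<inter> K) / l + of_bool (i \<in> K)"
      by (cases "i \<in> J"; cases "i \<in> K") (simp_all add: power2_diff power_divide)
    finally show ?thesis .
  qed
  have "(dist (centroid ((\<lambda>j. flip_coords c {j}) ` J)) (flip_coords c K))\<^sup>2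
      = (\<Sum>i\<in>UNIV. of_bool (i \<in> J) / l\<^sup>2 - 2 * of_bool (i \<in> J \<inter> K) / l + of_bool (i \<in> K))"
    by (simp add: power2_dist_vec nth_sq)
  also have "\<dots> = l / l\<^sup>2 - 2 * card (J \<inter> K) / l + card K"
    by (simp add: sum.distrib sum_subtractf l_def Int_def flip: sum_divide_distrib sum_distrib_left)
  also have "\<dots> = card K + (1 - 2 * real (card (J \<inter> K))) / l"
    using \<open>l > 0\<close> by (simp add: field_simps power2_eq_square)
  finally show ?thesis
    by (simp add: l_def)
qed

lemma dist_centroid_flip_coords_less_1:
  assumes "c \<in> cube" "j \<in> J"
  shows "dist (centroid ((\<lambda>j. flip_coords c {j}) ` J)) (flip_coords c {j}) < 1"
proof -
  have "J \<noteq> {}" "J \<inter> {j} = {j}"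
    using assms(2) by auto
  then have "(dist (centroid ((\<lambda>j. flip_coords c {j}) ` J)) (flip_coords c {j}))\<^sup>2 < 1"
    by (simp add: power2_dist_centroid_flip_coords[OF assms(1)] card_gt_0_iff)
  then show ?thesis
    by (simp add: abs_square_less_1)
qed

lemma one_le_dist_centroid_flip_coords:
  assumes "c \<in> cube" "card J \<ge> 3" "K \<noteq> {}" "\<forall>j\<in>J. K \<noteq> {j}"
  shows "1 \<le> dist (centroid ((\<lambda>j. flip_coords c {j}) ` J)) (flip_coords c K)"
proof -
  define l where "l = real (card J)"
  have "J \<noteq> {}" "l \<ge> 3"
    using assms(2) by (auto simp: l_def)
  have "1 \<le> card K + (1 - 2 * real (card (J \<inter> K))) / l"
  proof (cases "card K = 1")
    case True
    then obtain k where "K = {k}"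
      by (rule card_1_singletonE)
    with assms(4) have "J \<inter> K = {}"
      by auto
    then show ?thesis
      using \<open>K = {k}\<close> \<open>l \<ge> 3\<close> by simp
  next
    case False
    moreover have "card K \<noteq> 0"
      using assms(3) by simp
    ultimately have "real (card K) \<ge> 2"
      by linarith
    then have "(real (card K) - 1) * (l - 2) \<ge> 1 * 1"
      using \<open>l \<ge> 3\<close> by (intro mult_mono) auto
    moreover have "card (J \<inter> K) \<le> card K"
      by (simp add: card_mono)
    ultimately have "l \<le> card K * l + (1 - 2 * real (card (J \<inter> K)))"
      by (simp add: algebra_simps)
    then show ?thesis
      using \<open>l \<ge> 3\<close> by (simp add: field_simps)
  qed
  then have "1\<^sup>2 \<le> (dist (centroid ((\<lambda>j. flip_coords c {j}) ` J)) (flip_coords c K))\<^sup>2"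
    using \<open>J \<noteq> {}\<close> by (simp add: power2_dist_centroid_flip_coords[OF assms(1)] l_def)
  then show ?thesis
    by (rule power2_le_imp_le) simp
qed

theorem lemma4:
  fixes c :: "real ^ 'n" and A :: "(real ^ 'n) set"
  assumes "c \<in> cube"
    and "A \<subseteq> sphere1 c"
    and "card A \<ge> 3"
  shows "(\<forall>a\<in>A. dist (centroid A) a < 1)
       \<and> (\<forall>a\<in>cube - (A \<union> {c}). dist (centroid A) a \<ge> 1)"
proof -
  obtain J where A: "A = (\<lambda>j. flip_coords c {j}) ` J"
    using assms(1,2) by (auto simp: sphere1_eq_flip_coords subset_image_iff)
  have "card J \<ge> 3"
    using assms(1,3) by (simp add: A card_image inj_on_flip_coords_singleton)
  show ?thesis
  proof (intro conjI ballI)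
    fix a assume "a \<in> A"
    then obtain j where "j \<in> J" "a = flip_coords c {j}"
      using A by blast
    then show "dist (centroid A) a < 1"
      using assms(1) by (simp add: A dist_centroid_flip_coords_less_1)
  next
    fix b assume b: "b \<in> cube - (A \<union> {c})"
    define K where "K = {i. b $ i \<noteq> c $ i}"
    have b_eq: "b = flip_coords c K"
      using assms(1) b by (simp add: K_def flip_coords_diff_coords_eq)
    have "K \<noteq> {}"
      using b by (auto simp: K_def vec_eq_iff)
    moreover have "\<forall>j\<in>J. K \<noteq> {j}"
      using b b_eq A by blast
    ultimately show "dist (centroid A) b \<ge> 1"
      using assms(1) \<open>card J \<ge> 3\<close> by (simp add: A b_eq one_le_dist_centroid_flip_coords)
  qed
qed

end
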